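(* For $\mu\ge1$ define $$c^*(\mu)=\int_0^\infty \ln(z)\,G_\alpha\!\left(\frac{z}{\mu}\right)g_\alpha(z)\,dz+\int_0^\infty \ln(z)\,G_\alpha(\mu z)\,g_\alpha(z)\,dz .$$ Then $c^*$ is differentiable on $[1,\infty)$ with $$\frac{d}{d\mu}c^*(\mu)=-\frac{\Gamma(2\alpha)\,\mu^{\alpha-1}}{\Gamma(\alpha)^2(1+\mu)^{2\alpha}}\ln\mu\le 0,$$ and $\inf_{\mu\ge1}c^*(\mu)=\psi(\alpha)$, $\sup_{\mu\ge1}c^*(\mu)=c^*(1)=2\int_0^\infty\ln(z)G_\alpha(z)g_\alpha(z)\,dz$.
   Context: $\alpha>0$ is fixed. $G_\alpha$ and $g_\alpha$ denote the distribution function and density of the gamma distribution with shape $\alpha$ and scale $1$. $\psi=\Gamma'/\Gamma$ is the digamma function. *)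

theory Defs
  imports "HOL-Analysis.Analysis"
begin

definition gamma_density :: "real \<Rightarrow> real \<Rightarrow> real" where
  "gamma_density a x = (if x > 0 then x powr (a - 1) * exp (- x) / Gamma a else 0)"

definition gamma_CDF :: "real \<Rightarrow> real \<Rightarrow> real" where
  "gamma_CDF a x = (if x > 0 then (LINT t:{0..x}|lborel. gamma_density a t) else 0)"

definition cstar :: "real \<Rightarrow> real \<Rightarrow> real" where
  "cstar a \<mu> =
     (LINT z:{0<..}|lborel. ln z * gamma_CDF a (z / \<mu>) * gamma_density a z)
   + (LINT z:{0<..}|lborel. ln z * gamma_CDF a (\<mu> * z) * gamma_density a z)"

end

theory Submission
  imports Defs
begin

text \<open>Write \<open>L(s) = \<integral> ln z G\<^sub>\<alpha>(s z) g\<^sub>\<alpha>(z) dz\<close>, so that \<open>c*(\<mu>) = L(1/\<mu>) + L(\<mu>)\<close>.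
  Differentiating under the integral sign, \<open>L'(s) = \<integral> ln z \<cdot> z g\<^sub>\<alpha>(z) g\<^sub>\<alpha>(s z) dz\<close>, and
  \<open>z g\<^sub>\<alpha>(z) g\<^sub>\<alpha>(s z)\<close> is a multiple of the gamma density of shape \<open>2\<alpha>\<close> at \<open>(1 + s) z\<close>;
  hence \<open>L'(s) = b(s) (\<psi>(2\<alpha>) - ln (1 + s))\<close> where \<open>b\<close> is the density of the beta prime
  distribution with parameters \<open>\<alpha>, \<alpha>\<close>. Since \<open>b(1/\<mu>) / \<mu>\<^sup>2 = b(\<mu>)\<close>, the \<open>\<psi>(2\<alpha>)\<close> terms cancel
  in the chain rule and \<open>c*'(\<mu>) = - b(\<mu>) ln \<mu> \<le> 0\<close> for \<open>\<mu> \<ge> 1\<close>. So \<open>c*\<close> decreases on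
  \<open>[1, \<infinity>)\<close>: its supremum is \<open>c*(1)\<close> and its infimum is its limit at infinity, which by
  dominated convergence (\<open>G\<^sub>\<alpha>(z/\<mu>) \<rightarrow> 0\<close>, \<open>G\<^sub>\<alpha>(\<mu> z) \<rightarrow> 1\<close>) is
  \<open>\<integral> ln z g\<^sub>\<alpha>(z) dz = \<Gamma>'(\<alpha>)/\<Gamma>(\<alpha>) = \<psi>(\<alpha>)\<close>, again by differentiating Euler's integral.\<close>

lemma abs_ln_le_powr:
  fixes z b :: real
  assumes "z > 0" "b > 0"
  shows "\<bar>ln z\<bar> \<le> (2 / b) * z powr (- b / 2) + z"
proof (cases "z \<le> 1")
  case True
  have "ln (z powr (- b / 2)) \<le> z powr (- b / 2) - 1"
    using assms by (intro ln_le_minus_one) simp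
  then have "- ln z \<le> (2 / b) * z powr (- b / 2)"
    using assms by (simp add: ln_powr field_simps)
  then show ?thesis using True assms by simp
next
  case False
  have "0 \<le> ln z" "ln z \<le> z - 1" "0 \<le> (2 / b) * z powr (- b / 2)"
    using False assms by (simp_all add: ln_le_minus_one)
  then show ?thesis by linarith
qed

lemma powr_le_add_powr_exponent_between:
  fixes t :: real
  assumes "t > 0" "p \<le> x" "x \<le> q"
  shows "t powr x \<le> t powr p + t powr q"
proof (cases "t \<le> 1")
  case True
  then have "t powr x \<le> t powr p" using assms by (intro powr_mono') auto
  then show ?thesis by (simp add: add_increasing2)
next
  case False
  then have "t powr x \<le> t powr q" using assms by (intro powr_mono) auto
  then show ?thesis by (simp add: add_increasing)
qed

lemma powr_le_add_powr_base_between: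
  fixes x :: real
  assumes "0 < l" "l \<le> x" "x \<le> r"
  shows "x powr p \<le> l powr p + r powr p"
proof (cases "p \<ge> 0")
  case True
  then have "x powr p \<le> r powr p" using assms by (intro powr_mono2) auto
  then show ?thesis by (simp add: add_increasing)
next
  case False
  then have "x powr p \<le> l powr p" using assms by (intro powr_mono2') auto
  then show ?thesis by (simp add: add_increasing2)
qed

lemma antimono_on_atLeast_INF_SUP:
  fixes f :: "real \<Rightarrow> real"
  assumes dec: "antimono_on {a..} f" and lim: "(f \<longlongrightarrow> l) at_top"
  shows "(INF x\<in>{a..}. f x) = l" "(SUP x\<in>{a..}. f x) = f a"
proof -
  have dec': "f y \<le> f x" if "a \<le> x" "x \<le> y" for x y
    using monotone_onD[OF dec, of x y] that by simp
  have lower: "l \<le> f x" if "a \<le> x" for x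
  proof (rule tendsto_upperbound[OF lim])
    show "\<forall>\<^sub>F y in at_top. f y \<le> f x"
      using eventually_ge_at_top[of x] by eventually_elim (use dec' that in auto)
  qed simp
  then have bdd: "bdd_below (f ` {a..})"
    by (intro bdd_belowI2[of _ l]) simp
  have "(INF x\<in>{a..}. f x) \<le> l"
  proof (rule tendsto_lowerbound[OF lim])
    show "\<forall>\<^sub>F y in at_top. (INF x\<in>{a..}. f x) \<le> f y"
      using eventually_ge_at_top[of a] by eventually_elim (use bdd in \<open>auto intro: cINF_lower\<close>)
  qed simp
  moreover have "l \<le> (INF x\<in>{a..}. f x)"
    using lower by (auto intro: cINF_greatest)
  ultimately show "(INF x\<in>{a..}. f x) = l"
    by (rule antisym)
  have "bdd_above (f ` {a..})"
    using dec' by (intro bdd_aboveI2[of _ _ "f a"]) auto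
  then show "(SUP x\<in>{a..}. f x) = f a"
    using dec' by (intro antisym cSUP_least cSUP_upper) auto
qed

lemma has_real_derivative_integral_lborel:
  fixes f f' :: "real \<Rightarrow> real \<Rightarrow> real" and B :: "real \<Rightarrow> real"
  assumes x0: "l < x0" "x0 < r"
    and deriv: "\<And>x z. l < x \<Longrightarrow> x < r \<Longrightarrow> ((\<lambda>x. f x z) has_real_derivative f' x z) (at x)"
    and int: "\<And>x. l < x \<Longrightarrow> x < r \<Longrightarrow> integrable lborel (f x)"
    and meas: "f' x0 \<in> borel_measurable lborel"
    and B: "integrable lborel B"
    and bound: "\<And>x z. l < x \<Longrightarrow> x < r \<Longrightarrow> \<bar>f' x z\<bar> \<le> B z"
  shows "((\<lambda>x. integral\<^sup>L lborel (f x)) has_real_derivative integral\<^sup>L lborel (f' x0)) (at x0)"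
proof -
  let ?S = "{l<..<r}"
  have Lipschitz: "\<bar>f x z - f x0 z\<bar> \<le> B z * \<bar>x - x0\<bar>" if "x \<in> ?S" for x z
    using field_differentiable_bound[of ?S "\<lambda>x. f x z" "\<lambda>x. f' x z" "B z" x x0]
      deriv bound that x0 by (auto intro: has_field_derivative_at_within)
  have "((\<lambda>y. (integral\<^sup>L lborel (f y) - integral\<^sup>L lborel (f x0)) / (y - x0))
          \<longlongrightarrow> integral\<^sup>L lborel (f' x0)) (at x0 within ?S)"
  proof (subst tendsto_at_iff_sequentially, intro allI impI)
    fix X :: "nat \<Rightarrow> real"
    assume XS: "\<forall>i. X i \<in> ?S - {x0}" and X: "X \<longlonglongrightarrow> x0"
    let ?q = "\<lambda>i z. (f (X i) z - f x0 z) / (X i - x0)"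
    have "(\<lambda>i. integral\<^sup>L lborel (?q i)) \<longlonglongrightarrow> integral\<^sup>L lborel (f' x0)"
    proof (rule integral_dominated_convergence[OF _ _ B])
      show "?q i \<in> borel_measurable lborel" for i
        using int XS x0 by (auto intro!: borel_measurable_integrable)
      show "AE z in lborel. (\<lambda>i. ?q i z) \<longlonglongrightarrow> f' x0 z"
      proof (rule AE_I2)
        fix z
        have "((\<lambda>y. (f y z - f x0 z) / (y - x0)) \<longlongrightarrow> f' x0 z) (at x0)"
          using deriv[OF x0, of z] by (simp add: has_field_derivative_iff)
        moreover have "filterlim X (at x0) sequentially"
          using XS X by (auto simp: filterlim_at)
        ultimately show "(\<lambda>i. ?q i z) \<longlonglongrightarrow> f' x0 z"
          by (rule filterlim_compose[where f=X])
      qed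
      show "AE z in lborel. norm (?q i z) \<le> B z" for i
        using Lipschitz[of "X i"] XS by (auto simp: abs_divide divide_le_eq)
    qed (use meas in simp)
    moreover have "integral\<^sup>L lborel (?q i)
        = (integral\<^sup>L lborel (f (X i)) - integral\<^sup>L lborel (f x0)) / (X i - x0)" for i
      using int XS x0 by simp
    ultimately show "((\<lambda>y. (integral\<^sup>L lborel (f y) - integral\<^sup>L lborel (f x0)) / (y - x0)) \<circ> X)
        \<longlonglongrightarrow> integral\<^sup>L lborel (f' x0)"
      by (simp only: o_def)
  qed
  moreover have "at x0 within ?S = at x0"
    using x0 by (intro at_within_open) auto
  ultimately show ?thesis
    by (simp add: has_field_derivative_iff)
qed

definition Gamma_integrand :: "real \<Rightarrow> real \<Rightarrow> real" where
  "Gamma_integrand s t = (if t > 0 then t powr (s - 1) * exp (- t) else 0)"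

lemma Gamma_integrand_nonneg: "Gamma_integrand s t \<ge> 0"
  by (simp add: Gamma_integrand_def)

lemma borel_measurable_Gamma_integrand[measurable]: "Gamma_integrand s \<in> borel_measurable borel"
  unfolding Gamma_integrand_def by measurable

lemma has_bochner_integral_Gamma_integrand:
  assumes "s > 0"
  shows "has_bochner_integral lborel (Gamma_integrand s) (Gamma s)"
proof -
  have "(\<lambda>t. ennreal (indicator {0..} t * t powr (s - 1) / exp t)) = (\<lambda>t. ennreal (Gamma_integrand s t))"
    by (auto simp: Gamma_integrand_def indicator_def exp_minus field_simps)
  then have "(\<integral>\<^sup>+t. ennreal (Gamma_integrand s t) \<partial>lborel) = ennreal (Gamma s)"
    using Gamma_conv_nn_integral_real[OF assms] by simp
  then show ?thesis
    using assms by (subst (asm) nn_integral_eq_integrable)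
      (auto simp: has_bochner_integral_iff Gamma_integrand_nonneg less_imp_le)
qed

lemma integrable_ln_Gamma_integrand:
  assumes "s > 0"
  shows "integrable lborel (\<lambda>t. ln t * Gamma_integrand s t)"
proof (rule Bochner_Integration.integrable_bound)
  show "integrable lborel (\<lambda>t. (2 / s) * Gamma_integrand (s / 2) t + Gamma_integrand (s + 1) t)"
    using has_bochner_integral_Gamma_integrand[of "s / 2"] has_bochner_integral_Gamma_integrand[of "s + 1"]
      assms by (auto simp: has_bochner_integral_iff)
  have "\<bar>ln t\<bar> * (t powr (s - 1) * exp (- t))
      \<le> (2 / s) * (t powr (s / 2 - 1) * exp (- t)) + t powr (s + 1 - 1) * exp (- t)" if "t > 0" for t
  proof -
    have "\<bar>ln t\<bar> * (t powr (s - 1) * exp (- t)) \<le> ((2 / s) * t powr (- s / 2) + t) * (t powr (s - 1) * exp (- t))"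
      using abs_ln_le_powr[OF that assms] by (rule mult_right_mono) simp
    also have "\<dots> = (2 / s) * (t powr (s / 2 - 1) * exp (- t)) + t powr (s + 1 - 1) * exp (- t)"
      using that by (simp add: algebra_simps powr_add[symmetric] powr_mult_base)
    finally show ?thesis .
  qed
  then show "AE t in lborel. norm (ln t * Gamma_integrand s t)
      \<le> norm ((2 / s) * Gamma_integrand (s / 2) t + Gamma_integrand (s + 1) t)"
    using assms by (intro AE_I2) (simp add: Gamma_integrand_def abs_mult)
qed simp

lemma integral_ln_Gamma_integrand:
  assumes s: "s > 0"
  shows "(\<integral>t. ln t * Gamma_integrand s t \<partial>lborel) = Gamma s * Digamma s"
proof -
  let ?B = "\<lambda>t. \<bar>ln t * Gamma_integrand (s / 2) t\<bar> + \<bar>ln t * Gamma_integrand (2 * s) t\<bar>"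
  have "((\<lambda>x. integral\<^sup>L lborel (Gamma_integrand x)) has_real_derivative
          (\<integral>t. ln t * Gamma_integrand s t \<partial>lborel)) (at s)"
  proof (rule has_real_derivative_integral_lborel[where B = ?B])
    show "((\<lambda>x. Gamma_integrand x t) has_real_derivative ln t * Gamma_integrand x t) (at x)" for x t
      by (cases "t > 0") (auto simp: Gamma_integrand_def intro!: derivative_eq_intros)
    show "integrable lborel (Gamma_integrand x)" if "s / 2 < x" for x
      using has_bochner_integral_Gamma_integrand[of x] that s by (simp add: has_bochner_integral_iff)
    show "integrable lborel ?B"
      using integrable_ln_Gamma_integrand[of "s / 2"] integrable_ln_Gamma_integrand[of "2 * s"] s
      by auto
    show "\<bar>ln t * Gamma_integrand x t\<bar> \<le> ?B t" if "s / 2 < x" "x < 2 * s" for x t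
    proof (cases "t > 0")
      case True
      have "t powr (x - 1) \<le> t powr (s / 2 - 1) + t powr (2 * s - 1)"
        using that True by (intro powr_le_add_powr_exponent_between) auto
      then have "\<bar>ln t\<bar> * exp (- t) * t powr (x - 1)
          \<le> \<bar>ln t\<bar> * exp (- t) * (t powr (s / 2 - 1) + t powr (2 * s - 1))"
        by (rule mult_left_mono) simp
      then show ?thesis
        using True by (simp add: Gamma_integrand_def abs_mult algebra_simps)
    qed (simp add: Gamma_integrand_def)
  qed (use s in auto)
  then have "(Gamma has_real_derivative (\<integral>t. ln t * Gamma_integrand s t \<partial>lborel)) (at s)"
    by (rule has_field_derivative_transform_within_open[where S = "{0<..}"])
       (use s has_bochner_integral_Gamma_integrand in \<open>auto simp: has_bochner_integral_iff\<close>)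
  moreover have "(Gamma has_real_derivative Gamma s * Digamma s) (at s)"
    using s by (intro has_field_derivative_Gamma) auto
  ultimately show ?thesis
    by (rule DERIV_unique)
qed

lemma gamma_density_eq_Gamma_integrand: "gamma_density a t = Gamma_integrand a t / Gamma a"
  by (simp add: gamma_density_def Gamma_integrand_def)

lemma gamma_density_nonneg: "a > 0 \<Longrightarrow> gamma_density a t \<ge> 0"
  by (simp add: gamma_density_def)

lemma borel_measurable_gamma_density[measurable]: "gamma_density a \<in> borel_measurable borel"
  unfolding gamma_density_def by measurable

lemma has_bochner_integral_gamma_density:
  assumes "a > 0"
  shows "has_bochner_integral lborel (gamma_density a) 1"
proof -
  have "has_bochner_integral lborel (\<lambda>t. Gamma_integrand a t / Gamma a) (Gamma a / Gamma a)"
    using has_bochner_integral_Gamma_integrand[OF assms] by (rule has_bochner_integral_divide_zero)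
  then show ?thesis
    using Gamma_real_pos[OF assms] by (simp add: gamma_density_eq_Gamma_integrand[abs_def])
qed

lemma has_bochner_integral_ln_gamma_density:
  assumes "a > 0"
  shows "has_bochner_integral lborel (\<lambda>t. ln t * gamma_density a t) (Digamma a)"
proof -
  have "has_bochner_integral lborel (\<lambda>t. ln t * Gamma_integrand a t / Gamma a) (Gamma a * Digamma a / Gamma a)"
    using integrable_ln_Gamma_integrand[OF assms] integral_ln_Gamma_integrand[OF assms]
    by (intro has_bochner_integral_divide_zero) (simp add: has_bochner_integral_iff)
  then show ?thesis
    using Gamma_real_pos[OF assms] by (simp add: gamma_density_eq_Gamma_integrand)
qed

lemma has_bochner_integral_ln_gamma_density_scaled:
  assumes "b > 0" "c > 0"
  shows "has_bochner_integral lborel (\<lambda>w. ln w * gamma_density b (c * w)) ((Digamma b - ln c) / c)"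
proof -
  have "has_bochner_integral lborel (\<lambda>t. ln t * gamma_density b t - ln c * gamma_density b t) (Digamma b - ln c * 1)"
    using has_bochner_integral_ln_gamma_density[OF assms(1)] has_bochner_integral_gamma_density[OF assms(1)]
    by (intro has_bochner_integral_diff has_bochner_integral_mult_right)
  also have "(\<lambda>t. ln t * gamma_density b t - ln c * gamma_density b t) = (\<lambda>t. ln (t / c) * gamma_density b t)"
    using assms by (auto simp: fun_eq_iff gamma_density_def ln_div diff_divide_distrib left_diff_distrib)
  finally have "has_bochner_integral lborel (\<lambda>t. ln (t / c) * gamma_density b t) (Digamma b - ln c)"
    by simp
  then have "has_bochner_integral lborel (\<lambda>x. ln ((0 + c * x) / c) * gamma_density b (0 + c * x))
      ((Digamma b - ln c) /\<^sub>R \<bar>c\<bar>)"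
    using assms by (subst (asm) lborel_has_bochner_integral_real_affine_iff[where c = c and t = 0]) simp_all
  moreover have "(\<lambda>x. ln ((0 + c * x) / c) * gamma_density b (0 + c * x)) = (\<lambda>w. ln w * gamma_density b (c * w))"
    using assms by simp
  moreover have "(Digamma b - ln c) /\<^sub>R \<bar>c\<bar> = (Digamma b - ln c) / c"
    using assms by (simp add: divide_inverse mult.commute)
  ultimately show ?thesis
    by simp
qed

lemma gamma_density_mult_le:
  assumes "b > 0" "c \<ge> 1"
  shows "gamma_density b (c * w) \<le> c powr (b - 1) * gamma_density b w"
proof (cases "w > 0")
  case True
  have "exp (- (c * w)) \<le> exp (- w)"
    using assms True by simp
  then have "(c * w) powr (b - 1) * exp (- (c * w)) \<le> c powr (b - 1) * (w powr (b - 1) * exp (- w))"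
    using assms True by (simp add: powr_mult mult_left_mono)
  then show ?thesis
    using assms True by (simp add: gamma_density_def divide_right_mono)
qed (use assms in \<open>simp add: gamma_density_def zero_less_mult_iff\<close>)

lemma gamma_density_product:
  assumes "a > 0" "s > 0"
  shows "w * gamma_density a w * gamma_density a (s * w)
    = s powr (a - 1) * Gamma (2 * a) / (Gamma a ^ 2 * (1 + s) powr (2 * a - 1))
      * gamma_density (2 * a) ((1 + s) * w)"
proof (cases "w > 0")
  case True
  have "((1 + s) * w) powr (2 * a - 1) = (1 + s) powr (2 * a - 1) * (w * (w powr (a - 1) * w powr (a - 1)))"
    using True assms by (simp add: powr_mult powr_add[symmetric] powr_mult_base)
  moreover have "(s * w) powr (a - 1) = s powr (a - 1) * w powr (a - 1)"
    using True assms by (simp add: powr_mult)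
  moreover have "exp (- ((1 + s) * w)) = exp (- w) * exp (- (s * w))"
    by (simp add: exp_add[symmetric] algebra_simps)
  moreover have "Gamma (2 * a) \<noteq> 0"
    using assms by (simp add: Gamma_real_pos less_imp_neq[symmetric])
  ultimately show ?thesis
    using True assms by (simp add: gamma_density_def power2_eq_square)
qed (use assms in \<open>simp add: gamma_density_def zero_less_mult_iff\<close>)

lemma gamma_CDF_eq_integral:
  "x > 0 \<Longrightarrow> gamma_CDF a x = (\<integral>t. indicator {0..x} t * gamma_density a t \<partial>lborel)"
  by (simp add: gamma_CDF_def set_lebesgue_integral_def)

lemma integrable_indicator_gamma_density:
  assumes "a > 0" "A \<in> sets borel"
  shows "integrable lborel (\<lambda>t. indicator A t * gamma_density a t)"
proof (rule Bochner_Integration.integrable_bound)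
  show "integrable lborel (gamma_density a)"
    using has_bochner_integral_gamma_density[OF assms(1)] by (simp add: has_bochner_integral_iff)
  show "AE t in lborel. norm (indicator A t * gamma_density a t) \<le> norm (gamma_density a t)"
    by (intro AE_I2) (simp add: indicator_def)
qed (use assms(2) in measurable)

lemma gamma_CDF_nonneg: "a > 0 \<Longrightarrow> gamma_CDF a x \<ge> 0"
  by (auto simp: gamma_CDF_def set_lebesgue_integral_def gamma_density_nonneg intro!: integral_nonneg_AE)

lemma gamma_CDF_le_1:
  assumes "a > 0"
  shows "gamma_CDF a x \<le> 1"
proof (cases "x > 0")
  case True
  have "gamma_CDF a x \<le> integral\<^sup>L lborel (gamma_density a)"
    unfolding gamma_CDF_eq_integral[OF True]
  proof (rule integral_mono)
    show "integrable lborel (gamma_density a)"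
      using has_bochner_integral_gamma_density[OF assms] by (simp add: has_bochner_integral_iff)
    show "indicator {0..x} t * gamma_density a t \<le> gamma_density a t" for t
      using gamma_density_nonneg[OF assms, of t] by (simp add: indicator_def)
  qed (simp add: integrable_indicator_gamma_density assms)
  then show ?thesis
    using has_bochner_integral_gamma_density[OF assms] by (simp add: has_bochner_integral_iff)
qed (simp add: gamma_CDF_def)

lemma mono_gamma_CDF:
  assumes "a > 0"
  shows "mono (gamma_CDF a)"
proof
  fix x y :: real
  assume "x \<le> y"
  show "gamma_CDF a x \<le> gamma_CDF a y"
  proof (cases "x > 0")
    case True
    then have "y > 0"
      using \<open>x \<le> y\<close> by simp
    show ?thesis
      unfolding gamma_CDF_eq_integral[OF True] gamma_CDF_eq_integral[OF \<open>y > 0\<close>]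
    proof (rule integral_mono)
      show "indicator {0..x} t * gamma_density a t \<le> indicator {0..y} t * gamma_density a t" for t
        using \<open>x \<le> y\<close> gamma_density_nonneg[OF assms, of t] by (simp add: indicator_def)
    qed (simp_all add: integrable_indicator_gamma_density assms)
  qed (use gamma_CDF_nonneg[OF assms, of y] in \<open>simp add: gamma_CDF_def\<close>)
qed

lemma borel_measurable_gamma_CDF[measurable]: "a > 0 \<Longrightarrow> gamma_CDF a \<in> borel_measurable borel"
  by (rule borel_measurable_mono[OF mono_gamma_CDF])

lemma gamma_CDF_eq_integral_Icc:
  assumes "a > 0" "x > 0"
  shows "gamma_density a integrable_on {0..x}" "gamma_CDF a x = integral {0..x} (gamma_density a)"
proof -
  have "set_integrable lborel {0..x} (gamma_density a)"
    unfolding set_integrable_def using integrable_indicator_gamma_density[OF assms(1)] by simp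
  then show "gamma_density a integrable_on {0..x}" "gamma_CDF a x = integral {0..x} (gamma_density a)"
    using set_borel_integral_eq_integral assms(2) by (auto simp: gamma_CDF_def)
qed

text \<open>The density may be unbounded at 0, so the fundamental theorem of calculus is applied on
  an interval bounded away from 0.\<close>
lemma has_real_derivative_gamma_CDF:
  assumes a: "a > 0" and x: "x > 0"
  shows "(gamma_CDF a has_real_derivative gamma_density a x) (at x)"
proof -
  have "continuous_on {x / 2..2 * x} (\<lambda>t. t powr (a - 1) * exp (- t) / Gamma a)"
    using x Gamma_real_pos[OF a] by (intro continuous_intros) auto
  then have "continuous_on {x / 2..2 * x} (gamma_density a)"
    by (rule continuous_on_eq) (use x in \<open>auto simp: gamma_density_def\<close>)
  then have "((\<lambda>y. integral {x / 2..y} (gamma_density a)) has_real_derivative gamma_density a x)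
      (at x within {x / 2..2 * x})"
    by (rule integral_has_real_derivative) (use x in auto)
  then have "((\<lambda>y. integral {0..x / 2} (gamma_density a) + integral {x / 2..y} (gamma_density a))
      has_real_derivative gamma_density a x) (at x)"
    using x by (auto simp: at_within_Icc_at intro!: derivative_eq_intros)
  then show ?thesis
  proof (rule has_field_derivative_transform_within_open[where S = "{x / 2<..}"])
    fix y
    assume "y \<in> {x / 2<..}"
    then show "integral {0..x / 2} (gamma_density a) + integral {x / 2..y} (gamma_density a) = gamma_CDF a y"
      using Henstock_Kurzweil_Integration.integral_combine[of 0 "x / 2" y "gamma_density a"]
        gamma_CDF_eq_integral_Icc[OF a, of y] x by auto
  qed (use x in auto)
qed

lemma gamma_CDF_tendsto_1:
  assumes a: "a > 0"
  shows "(gamma_CDF a \<longlongrightarrow> 1) at_top"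
proof -
  have "((\<lambda>t. \<integral>u. indicator {0..t} u * gamma_density a u \<partial>lborel) \<longlongrightarrow> integral\<^sup>L lborel (gamma_density a)) at_top"
  proof (rule integral_dominated_convergence_at_top[where w = "gamma_density a"])
    show "AE u in lborel. ((\<lambda>t. indicator {0..t} u * gamma_density a u) \<longlongrightarrow> gamma_density a u) at_top"
    proof (rule AE_I2)
      fix u :: real
      have "\<forall>\<^sub>F t in at_top. indicator {0..t} u * gamma_density a u = gamma_density a u"
        using eventually_ge_at_top[of u] by eventually_elim (auto simp: gamma_density_def)
      then show "((\<lambda>t. indicator {0..t} u * gamma_density a u) \<longlongrightarrow> gamma_density a u) at_top"
        by (rule tendsto_eventually)
    qed
    show "\<forall>\<^sub>F t in at_top. AE u in lborel. norm (indicator {0..t} u * gamma_density a u) \<le> gamma_density a u"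
      using gamma_density_nonneg[OF a] by (simp add: indicator_def)
  qed (use has_bochner_integral_gamma_density[OF a] in \<open>simp_all add: has_bochner_integral_iff\<close>)
  moreover have "\<forall>\<^sub>F t in at_top. (\<integral>u. indicator {0..t} u * gamma_density a u \<partial>lborel) = gamma_CDF a t"
    using eventually_gt_at_top[of 0] by eventually_elim (simp add: gamma_CDF_eq_integral)
  ultimately show ?thesis
    using has_bochner_integral_gamma_density[OF a] by (simp add: has_bochner_integral_iff tendsto_cong)
qed

lemma gamma_CDF_tendsto_0:
  assumes a: "a > 0"
  shows "(gamma_CDF a \<longlongrightarrow> 0) (at_right 0)"
proof -
  have "((\<lambda>t. \<integral>u. indicator {0..inverse t} u * gamma_density a u \<partial>lborel) \<longlongrightarrow> integral\<^sup>L lborel (\<lambda>u::real. 0::real)) at_top"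
  proof (rule integral_dominated_convergence_at_top[where w = "gamma_density a"])
    show "AE u in lborel. ((\<lambda>t. indicator {0..inverse t} u * gamma_density a u) \<longlongrightarrow> 0) at_top"
    proof (rule AE_I2)
      fix u :: real
      have "\<forall>\<^sub>F t in at_top. indicator {0..inverse t} u * gamma_density a u = 0"
      proof (cases "u > 0")
        case True
        show ?thesis
          using eventually_gt_at_top[of "inverse u"]
        proof eventually_elim
          case (elim t)
          then have "inverse t < u"
            using True by (metis inverse_inverse_eq inverse_less_imp_less inverse_positive_iff_positive)
          then show ?case by (simp add: indicator_def)
        qed
      qed (simp add: gamma_density_def)
      then show "((\<lambda>t. indicator {0..inverse t} u * gamma_density a u) \<longlongrightarrow> 0) at_top"
        by (rule tendsto_eventually)
    qed
    show "\<forall>\<^sub>F t in at_top. AE u in lborel. norm (indicator {0..inverse t} u * gamma_density a u) \<le> gamma_density a u"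
      using gamma_density_nonneg[OF a] by (simp add: indicator_def)
  qed (use has_bochner_integral_gamma_density[OF a] in \<open>simp_all add: has_bochner_integral_iff\<close>)
  moreover have "\<forall>\<^sub>F t in at_top. (\<integral>u. indicator {0..inverse t} u * gamma_density a u \<partial>lborel) = gamma_CDF a (inverse t)"
    using eventually_gt_at_top[of 0] by eventually_elim (simp add: gamma_CDF_eq_integral)
  ultimately have "((\<lambda>t. gamma_CDF a (inverse t)) \<longlongrightarrow> 0) at_top"
    by (simp add: tendsto_cong)
  then show ?thesis
    by (simp add: filterlim_at_right_to_top)
qed

definition beta_prime_density :: "real \<Rightarrow> real \<Rightarrow> real" where
  "beta_prime_density a s = Gamma (2 * a) * s powr (a - 1) / (Gamma a ^ 2 * (1 + s) powr (2 * a))"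

lemma beta_prime_density_nonneg: "a > 0 \<Longrightarrow> beta_prime_density a s \<ge> 0"
  by (simp add: beta_prime_density_def)

lemma beta_prime_density_inverse:
  assumes "s > 0"
  shows "beta_prime_density a (inverse s) * inverse s ^ 2 = beta_prime_density a s"
proof -
  have denominator: "(1 + inverse s) powr (2 * a) = (1 + s) powr (2 * a) / s powr (2 * a)"
    using assms by (simp add: field_simps flip: powr_divide)
  have "inverse s powr (a - 1) * inverse s ^ 2 = inverse s powr (a - 1 + 2)"
    using assms by (simp only: powr_add powr_numeral inverse_nonnegative_iff_nonnegative less_imp_le)
  also have "\<dots> = inverse (s powr (a + 1))"
    by (simp add: inverse_powr add.commute)
  finally have "inverse s powr (a - 1) * inverse s ^ 2 * s powr (2 * a) = s powr (2 * a) / s powr (a + 1)"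
    by (simp add: divide_inverse mult.commute)
  also have "\<dots> = s powr (a - 1)"
    by (simp flip: powr_diff)
  finally show ?thesis
    unfolding beta_prime_density_def denominator using assms by (simp add: field_simps)
qed

text \<open>The integral runs over the whole line: the factor
  \<open>gamma_density a z\<close> vanishes for \<open>z \<le> 0\<close>, where \<open>ln z\<close> is junk.\<close>
definition log_CDF_integral :: "real \<Rightarrow> real \<Rightarrow> real" where
  "log_CDF_integral a s = (\<integral>z. ln z * gamma_CDF a (s * z) * gamma_density a z \<partial>lborel)"

lemma cstar_eq_log_CDF_integral: "cstar a \<mu> = log_CDF_integral a (inverse \<mu>) + log_CDF_integral a \<mu>"
proof -
  have "(LINT z:{0<..}|lborel. ln z * gamma_CDF a (s * z) * gamma_density a z) = log_CDF_integral a s" for s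
    unfolding set_lebesgue_integral_def log_CDF_integral_def
    by (rule Bochner_Integration.integral_cong) (auto simp: gamma_density_def)
  from this[of "inverse \<mu>"] this[of \<mu>] show ?thesis
    by (simp add: cstar_def divide_inverse mult.commute)
qed

lemma abs_ln_mult_gamma_density_le:
  assumes "a > 0" "0 \<le> p" "p \<le> 1"
  shows "\<bar>ln z * p * gamma_density a z\<bar> \<le> \<bar>ln z * gamma_density a z\<bar>"
proof -
  have "\<bar>ln z\<bar> * p * gamma_density a z \<le> \<bar>ln z\<bar> * 1 * gamma_density a z"
    using assms gamma_density_nonneg[OF assms(1), of z] by (intro mult_right_mono mult_left_mono) auto
  then show ?thesis
    using assms gamma_density_nonneg[OF assms(1), of z] by (simp add: abs_mult)
qed

lemma integrable_log_CDF_integrand: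
  assumes "a > 0"
  shows "integrable lborel (\<lambda>z. ln z * gamma_CDF a (s * z) * gamma_density a z)"
proof (rule Bochner_Integration.integrable_bound)
  show "integrable lborel (\<lambda>z. ln z * gamma_density a z)"
    using has_bochner_integral_ln_gamma_density[OF assms] by (simp add: has_bochner_integral_iff)
  show "AE z in lborel. norm (ln z * gamma_CDF a (s * z) * gamma_density a z) \<le> norm (ln z * gamma_density a z)"
    using assms gamma_CDF_nonneg gamma_CDF_le_1
    by (intro AE_I2) (simp only: real_norm_def abs_ln_mult_gamma_density_le)
qed (use assms in measurable)

lemma has_real_derivative_log_CDF_integral:
  assumes a: "a > 0" and s: "s > 0"
  shows "(log_CDF_integral a has_real_derivative beta_prime_density a s * (Digamma (2 * a) - ln (1 + s))) (at s)"
proof -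
  define K where "K x = x powr (a - 1) * Gamma (2 * a) / (Gamma a ^ 2 * (1 + x) powr (2 * a - 1))" for x
  define B where "B z = ((s / 2) powr (a - 1) + (2 * s) powr (a - 1)) * Gamma (2 * a) / Gamma a ^ 2
    * \<bar>ln z * gamma_density (2 * a) z\<bar>" for z
  have product: "z * gamma_density a z * gamma_density a (x * z) = K x * gamma_density (2 * a) ((1 + x) * z)"
    if "x > 0" for x z
    using gamma_density_product[OF a that] by (simp add: K_def)
  have "(log_CDF_integral a has_real_derivative
      (\<integral>z. ln z * (z * gamma_density a z * gamma_density a (s * z)) \<partial>lborel)) (at s)"
    unfolding log_CDF_integral_def
  proof (rule has_real_derivative_integral_lborel[where l = "s / 2" and r = "2 * s" and B = B])
    fix x z :: real
    assume x: "s / 2 < x" "x < 2 * s"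
    show "((\<lambda>x. ln z * gamma_CDF a (x * z) * gamma_density a z) has_real_derivative
        ln z * (z * gamma_density a z * gamma_density a (x * z))) (at x)"
    proof (cases "z > 0")
      case True
      then have "((\<lambda>x. gamma_CDF a (x * z)) has_real_derivative gamma_density a (x * z) * z) (at x)"
        using x s by (intro DERIV_chain2[OF has_real_derivative_gamma_CDF[OF a]] derivative_eq_intros) auto
      then show ?thesis
        by (auto intro!: derivative_eq_intros)
    qed (simp add: gamma_density_def)
    have "\<bar>ln z * (z * gamma_density a z * gamma_density a (x * z))\<bar>
        = \<bar>ln z\<bar> * K x * gamma_density (2 * a) ((1 + x) * z)"
      using x s a by (simp add: product abs_mult K_def gamma_density_nonneg)
    also have "\<dots> \<le> \<bar>ln z\<bar> * K x * ((1 + x) powr (2 * a - 1) * gamma_density (2 * a) z)"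
      using x s a by (intro mult_left_mono gamma_density_mult_le) (auto simp: K_def)
    also have "\<dots> = x powr (a - 1) * Gamma (2 * a) / Gamma a ^ 2 * \<bar>ln z * gamma_density (2 * a) z\<bar>"
      using x s a by (simp add: K_def abs_mult gamma_density_nonneg)
    also have "\<dots> \<le> B z"
      unfolding B_def using x s a
      by (intro mult_right_mono divide_right_mono powr_le_add_powr_base_between) auto
    finally show "\<bar>ln z * (z * gamma_density a z * gamma_density a (x * z))\<bar> \<le> B z" .
  next
    show "integrable lborel B"
      unfolding B_def[abs_def] using has_bochner_integral_ln_gamma_density[of "2 * a"] a
      by (intro integrable_mult_right integrable_abs) (simp add: has_bochner_integral_iff)
  qed (use s a integrable_log_CDF_integrand in \<open>auto simp: mult.commute\<close>)
  also have "(\<integral>z. ln z * (z * gamma_density a z * gamma_density a (s * z)) \<partial>lborel)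
      = K s / (1 + s) * (Digamma (2 * a) - ln (1 + s))"
    using has_bochner_integral_ln_gamma_density_scaled[of "2 * a" "1 + s"] a s
    by (simp add: product has_bochner_integral_iff mult.left_commute)
  also have "K s / (1 + s) = beta_prime_density a s"
  proof -
    have "(1 + s) powr (2 * a - 1) * (1 + s) = (1 + s) powr (2 * a)"
      using s by (simp add: powr_mult_base mult.commute)
    then show ?thesis
      by (simp add: K_def beta_prime_density_def mult.assoc)
  qed
  finally show ?thesis .
qed

lemma tendsto_log_CDF_integral:
  fixes f :: "real \<Rightarrow> real"
  assumes a: "a > 0" and lim: "\<And>z. z > 0 \<Longrightarrow> ((\<lambda>t. gamma_CDF a (f t * z)) \<longlongrightarrow> c) at_top"
  shows "((\<lambda>t. log_CDF_integral a (f t)) \<longlongrightarrow> c * Digamma a) at_top"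
proof -
  have "((\<lambda>t. log_CDF_integral a (f t)) \<longlongrightarrow> (\<integral>z. ln z * c * gamma_density a z \<partial>lborel)) at_top"
    unfolding log_CDF_integral_def
  proof (rule integral_dominated_convergence_at_top[where w = "\<lambda>z. \<bar>ln z * gamma_density a z\<bar>"])
    show "integrable lborel (\<lambda>z. \<bar>ln z * gamma_density a z\<bar>)"
      using has_bochner_integral_ln_gamma_density[OF a] by (simp add: has_bochner_integral_iff)
    show "AE z in lborel. ((\<lambda>t. ln z * gamma_CDF a (f t * z) * gamma_density a z)
        \<longlongrightarrow> ln z * c * gamma_density a z) at_top"
    proof (rule AE_I2)
      fix z :: real
      show "((\<lambda>t. ln z * gamma_CDF a (f t * z) * gamma_density a z) \<longlongrightarrow> ln z * c * gamma_density a z) at_top"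
      proof (cases "z > 0")
        case True
        then show ?thesis by (intro tendsto_mult tendsto_const lim)
      qed (simp add: gamma_density_def)
    qed
    show "\<forall>\<^sub>F t in at_top. AE z in lborel.
        norm (ln z * gamma_CDF a (f t * z) * gamma_density a z) \<le> \<bar>ln z * gamma_density a z\<bar>"
      using a gamma_CDF_nonneg gamma_CDF_le_1
      by (intro always_eventually allI AE_I2) (simp only: real_norm_def abs_ln_mult_gamma_density_le)
    show "(\<lambda>z. ln z * c * gamma_density a z) \<in> borel_measurable lborel"
      by measurable
    show "(\<lambda>z. ln z * gamma_CDF a (f t * z) * gamma_density a z) \<in> borel_measurable lborel" for t
      using a by measurable
  qed
  moreover have "(\<integral>z. ln z * c * gamma_density a z \<partial>lborel) = c * Digamma a"
    using has_bochner_integral_ln_gamma_density[OF a]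
    by (simp add: has_bochner_integral_iff mult.commute[of _ c] mult.assoc)
  ultimately show ?thesis
    by simp
qed

lemma cstar_tendsto_Digamma:
  assumes a: "a > 0"
  shows "(cstar a \<longlongrightarrow> Digamma a) at_top"
proof -
  have "((\<lambda>\<mu>. log_CDF_integral a (inverse \<mu>)) \<longlongrightarrow> 0 * Digamma a) at_top"
  proof (rule tendsto_log_CDF_integral[OF a])
    fix z :: real
    assume z: "z > 0"
    have "filterlim (\<lambda>\<mu>. inverse \<mu> * z) (at_right 0) at_top"
      unfolding filterlim_at
    proof
      show "\<forall>\<^sub>F \<mu> in at_top. inverse \<mu> * z \<in> {0<..} \<and> inverse \<mu> * z \<noteq> 0"
        using eventually_gt_at_top[of 0] by eventually_elim (use z in auto)
      show "((\<lambda>\<mu>. inverse \<mu> * z) \<longlongrightarrow> 0) at_top"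
        by (intro tendsto_mult_left_zero tendsto_inverse_0_at_top filterlim_ident)
    qed
    then show "((\<lambda>\<mu>. gamma_CDF a (inverse \<mu> * z)) \<longlongrightarrow> 0) at_top"
      by (rule filterlim_compose[OF gamma_CDF_tendsto_0[OF a]])
  qed
  moreover have "((\<lambda>\<mu>. log_CDF_integral a (id \<mu>)) \<longlongrightarrow> 1 * Digamma a) at_top"
  proof (rule tendsto_log_CDF_integral[OF a])
    fix z :: real
    assume "z > 0"
    then have "filterlim (\<lambda>\<mu>. z * \<mu>) at_top at_top"
      by (intro filterlim_tendsto_pos_mult_at_top[OF tendsto_const _ filterlim_ident])
    then have "filterlim (\<lambda>\<mu>. id \<mu> * z) at_top at_top"
      by (simp add: mult.commute)
    then show "((\<lambda>\<mu>. gamma_CDF a (id \<mu> * z)) \<longlongrightarrow> 1) at_top"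
      by (rule filterlim_compose[OF gamma_CDF_tendsto_1[OF a]])
  qed
  ultimately show ?thesis
    using tendsto_add by (fastforce simp: cstar_eq_log_CDF_integral[abs_def])
qed

lemma has_real_derivative_cstar:
  assumes a: "a > 0" and \<mu>: "\<mu> > 0"
  shows "(cstar a has_real_derivative - beta_prime_density a \<mu> * ln \<mu>) (at \<mu>)"
proof -
  let ?L' = "\<lambda>s. beta_prime_density a s * (Digamma (2 * a) - ln (1 + s))"
  have "((\<lambda>\<mu>. log_CDF_integral a (inverse \<mu>) + log_CDF_integral a \<mu>) has_real_derivative
      ?L' (inverse \<mu>) * - (inverse \<mu> ^ 2) + ?L' \<mu>) (at \<mu>)"
    using \<mu> by (intro DERIV_add DERIV_chain2[OF has_real_derivative_log_CDF_integral[OF a]]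
        has_real_derivative_log_CDF_integral[OF a]) (auto intro!: derivative_eq_intros simp: power2_eq_square)
  moreover have "?L' (inverse \<mu>) * - (inverse \<mu> ^ 2) + ?L' \<mu> = - beta_prime_density a \<mu> * ln \<mu>"
  proof -
    have ln_inverse: "ln (1 + inverse \<mu>) = ln (1 + \<mu>) - ln \<mu>"
      using \<mu> by (simp add: field_simps ln_div)
    have "?L' (inverse \<mu>) * - (inverse \<mu> ^ 2)
        = - (beta_prime_density a (inverse \<mu>) * inverse \<mu> ^ 2) * (Digamma (2 * a) - ln (1 + inverse \<mu>))"
      by (simp only: mult_ac mult_minus_left mult_minus_right)
    also have "\<dots> = - beta_prime_density a \<mu> * (Digamma (2 * a) - (ln (1 + \<mu>) - ln \<mu>))"
      by (simp only: beta_prime_density_inverse[OF \<mu>] ln_inverse)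
    finally have inverse_part: "?L' (inverse \<mu>) * - (inverse \<mu> ^ 2)
        = - beta_prime_density a \<mu> * (Digamma (2 * a) - (ln (1 + \<mu>) - ln \<mu>))" .
    show ?thesis
      unfolding inverse_part by (simp add: algebra_simps)
  qed
  ultimately show ?thesis
    by (simp only: cstar_eq_log_CDF_integral[abs_def])
qed

lemma antimono_on_cstar:
  assumes a: "a > 0"
  shows "antimono_on {1..} (cstar a)"
proof (rule monotone_onI)
  fix x y :: real
  assume x: "x \<in> {1..}" and "x \<le> y"
  show "cstar a y \<le> cstar a x"
  proof (rule DERIV_nonpos_imp_nonincreasing[OF \<open>x \<le> y\<close>])
    fix t
    assume "x \<le> t"
    then have "t \<ge> 1"
      using x by simp
    then have "DERIV (cstar a) t :> - beta_prime_density a t * ln t" "- beta_prime_density a t * ln t \<le> 0"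
      using has_real_derivative_cstar[OF a] beta_prime_density_nonneg[OF a, of t] by simp_all
    then show "\<exists>d. DERIV (cstar a) t :> d \<and> d \<le> 0"
      by blast
  qed
qed

theorem mainTheorem4:
  fixes \<alpha> :: real
  assumes "\<alpha> > 0"
  shows "(\<forall>\<mu>\<ge>1. (cstar \<alpha> has_real_derivative
            (- (Gamma (2 * \<alpha>) * \<mu> powr (\<alpha> - 1))
               / (Gamma \<alpha> ^ 2 * (1 + \<mu>) powr (2 * \<alpha>)) * ln \<mu>))
            (at \<mu> within {1..}))
      \<and> (\<forall>\<mu>\<ge>1. - (Gamma (2 * \<alpha>) * \<mu> powr (\<alpha> - 1))
               / (Gamma \<alpha> ^ 2 * (1 + \<mu>) powr (2 * \<alpha>)) * ln \<mu> \<le> 0)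
      \<and> (INF \<mu>\<in>{1..}. cstar \<alpha> \<mu>) = Digamma \<alpha>
      \<and> (SUP \<mu>\<in>{1..}. cstar \<alpha> \<mu>) = cstar \<alpha> 1
      \<and> cstar \<alpha> 1 = 2 * (LINT z:{0<..}|lborel. ln z * gamma_CDF \<alpha> z * gamma_density \<alpha> z)"
proof -
  have "- (Gamma (2 * \<alpha>) * \<mu> powr (\<alpha> - 1)) / (Gamma \<alpha> ^ 2 * (1 + \<mu>) powr (2 * \<alpha>)) * ln \<mu>
      = - beta_prime_density \<alpha> \<mu> * ln \<mu>" for \<mu>
    by (simp add: beta_prime_density_def)
  moreover have "\<forall>\<mu>\<ge>1. (cstar \<alpha> has_real_derivative - beta_prime_density \<alpha> \<mu> * ln \<mu>) (at \<mu> within {1..})"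
    using has_real_derivative_cstar[OF assms] by (simp add: has_field_derivative_at_within)
  moreover have "\<forall>\<mu>\<ge>1. - beta_prime_density \<alpha> \<mu> * ln \<mu> \<le> 0"
    using beta_prime_density_nonneg[OF assms] by simp
  moreover note antimono_on_atLeast_INF_SUP[OF antimono_on_cstar[OF assms] cstar_tendsto_Digamma[OF assms]]
  moreover have "cstar \<alpha> 1 = 2 * (LINT z:{0<..}|lborel. ln z * gamma_CDF \<alpha> z * gamma_density \<alpha> z)"
    by (simp only: cstar_def div_by_1 mult_1 mult_2)
  ultimately show ?thesis
    by simp
qed

end
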